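(* In an $m$-player layered finite-horizon Markov game, let $\pi^j_t,\pi^j_{t+1}$ ($j\in[m]$) be arbitrary policies of the players in episodes $t$ and $t+1$. Then for any player $i\in[m]$ and any policy $\mu$ of player $i$, $$\big\|q^\mu_{P^i_{t+1}}-q^\mu_{P^i_t}\big\|_\infty\le H^2\sum_{j\ne i}\|\pi^j_{t+1}-\pi^j_t\|_{\infty,1}.$$
   Context: Markov game: horizon $H$; states $\mathcal S=\bigcup_{h=1}^{H+1}\mathcal S_h$ with $\mathcal S_1=\{s_1\}$; players $i\in[m]$ with finite action sets $\mathcal A_i$; for $s\in\mathcal S_h$ and joint action $\mathbf a$, $P(\cdot\mid s,\mathbf a)$ is a distribution over $\mathcal S_{h+1}$. Policies assign $\pi^j(\cdot\mid s)\in\Delta_{\mathcal A_j}$, players act independently. The induced transition kernel of player $i$ in episode $t$ is $P^i_t(\cdot\mid s,a)=\mathbb E_{\mathbf a\sim\boldsymbol\pi_t(\cdot\mid s)}[P(\cdot\mid s,\mathbf a)\mid a^i=a]$, where $\boldsymbol\pi_t(\cdot\mid s)$ is the product of the $\pi^j_t(\cdot\mid s)$. For a single-agent kernel $P'$ and policy $\mu$, $q^\mu_{P'}(s)=\Pr(s_h=s\mid P',\mu,s_1)$ for $s\in\mathcal S_h$, viewed as a vector indexed by $\mathcal S$. $\|\pi-\tilde\pi\|_{\infty,1}=\max_s\|\pi(\cdot\mid s)-\tilde\pi(\cdot\mid s)\|_1$. *)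

theory Defs
  imports "HOL-Library.FuncSet" Complex_Main
begin

(* Players are indexed by 0..<m. A joint action is an element of PiE {..<m} A,
   where A j is the (finite) action set of player j. All actions live in one type 'a. *)

definition joint_actions :: "nat \<Rightarrow> (nat \<Rightarrow> 'a set) \<Rightarrow> (nat \<Rightarrow> 'a) set" where
  "joint_actions m A = PiE {..<m} A"

definition layered_markov_game ::
  "nat \<Rightarrow> 's set \<Rightarrow> ('s \<Rightarrow> nat) \<Rightarrow> 's \<Rightarrow> nat \<Rightarrow> (nat \<Rightarrow> 'a set)
   \<Rightarrow> ('s \<Rightarrow> (nat \<Rightarrow> 'a) \<Rightarrow> 's \<Rightarrow> real) \<Rightarrow> bool" where
  "layered_markov_game H S layer s1 m A P \<longleftrightarrow>
     finite S \<and> s1 \<in> S \<and>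
     (\<forall>s\<in>S. 1 \<le> layer s \<and> layer s \<le> Suc H) \<and>
     {s\<in>S. layer s = 1} = {s1} \<and>
     (\<forall>j<m. finite (A j) \<and> A j \<noteq> {}) \<and>
     (\<forall>s\<in>S. layer s \<le> H \<longrightarrow> (\<forall>b\<in>joint_actions m A.
        (\<forall>s'. 0 \<le> P s b s') \<and>
        (\<forall>s'. P s b s' \<noteq> 0 \<longrightarrow> s' \<in> S \<and> layer s' = Suc (layer s)) \<and>
        (\<Sum>s'\<in>S. P s b s') = 1))"

definition is_policy :: "'s set \<Rightarrow> 'a set \<Rightarrow> ('s \<Rightarrow> 'a \<Rightarrow> real) \<Rightarrow> bool" where
  "is_policy S Aj pol \<longleftrightarrow> (\<forall>s\<in>S. (\<forall>a\<in>Aj. 0 \<le> pol s a) \<and> (\<Sum>a\<in>Aj. pol s a) = 1)"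

(* Induced kernel of player i:
   P^i(s'|s,a) = E_{b ~ prod_j pol j (.|s)} [ P(s'|s,b) | b i = a ]
              = sum over joint actions b with b i = a of (prod_{j\<noteq>i} pol j s (b j)) * P s b s'
   (the players act independently). *)
definition induced_kernel ::
  "nat \<Rightarrow> (nat \<Rightarrow> 'a set) \<Rightarrow> ('s \<Rightarrow> (nat \<Rightarrow> 'a) \<Rightarrow> 's \<Rightarrow> real)
   \<Rightarrow> (nat \<Rightarrow> 's \<Rightarrow> 'a \<Rightarrow> real) \<Rightarrow> nat \<Rightarrow> 's \<Rightarrow> 'a \<Rightarrow> 's \<Rightarrow> real" where
  "induced_kernel m A P pol i s a s' =
     (\<Sum>b\<in>{b\<in>joint_actions m A. b i = a}. (\<Prod>j\<in>{..<m}-{i}. pol j s (b j)) * P s b s')"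

(* occ ... h s = Pr(s_{h+1} = s | P', mu, s1)  (layers are 1-based, h is 0-based) *)
fun occ :: "'s set \<Rightarrow> ('s \<Rightarrow> nat) \<Rightarrow> 's \<Rightarrow> 'a set \<Rightarrow> ('s \<Rightarrow> 'a \<Rightarrow> 's \<Rightarrow> real)
            \<Rightarrow> ('s \<Rightarrow> 'a \<Rightarrow> real) \<Rightarrow> nat \<Rightarrow> 's \<Rightarrow> real" where
  "occ S layer s1 Ai Pk mu 0 s = (if s = s1 then 1 else 0)"
| "occ S layer s1 Ai Pk mu (Suc h) s' =
     (\<Sum>s\<in>{s\<in>S. layer s = Suc h}. \<Sum>a\<in>Ai. occ S layer s1 Ai Pk mu h s * mu s a * Pk s a s')"

definition occupancy :: "'s set \<Rightarrow> ('s \<Rightarrow> nat) \<Rightarrow> 's \<Rightarrow> 'a set \<Rightarrow> ('s \<Rightarrow> 'a \<Rightarrow> 's \<Rightarrow> real)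
            \<Rightarrow> ('s \<Rightarrow> 'a \<Rightarrow> real) \<Rightarrow> 's \<Rightarrow> real" where
  "occupancy S layer s1 Ai Pk mu s = occ S layer s1 Ai Pk mu (layer s - 1) s"

definition sup_dist :: "'s set \<Rightarrow> ('s \<Rightarrow> real) \<Rightarrow> ('s \<Rightarrow> real) \<Rightarrow> real" where
  "sup_dist S f g = Max ((\<lambda>s. \<bar>f s - g s\<bar>) ` S)"

definition policy_dist :: "'s set \<Rightarrow> 'a set \<Rightarrow> ('s \<Rightarrow> 'a \<Rightarrow> real) \<Rightarrow> ('s \<Rightarrow> 'a \<Rightarrow> real) \<Rightarrow> real" where
  "policy_dist S Aj pol pol' = Max ((\<lambda>s. \<Sum>a\<in>Aj. \<bar>pol s a - pol' s a\<bar>) ` S)"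

end

theory Submission
  imports Defs
begin

text \<open>Player \<open>i\<close>'s induced kernel is a mixture of the fixed transition rows
  \<open>P(. | s, (a, b_{-i}))\<close> under the product of the opponents' policies. The L1 distance of two
  product distributions is at most the sum of the L1 distances of their factors, so at every
  state the kernels of episodes \<open>t\<close> and \<open>t+1\<close> are L1-close up to
  \<open>D = sum_{j ~= i} ||pi^j_{t+1} - pi^j_t||_{inf,1}\<close>. Following a fixed policy \<open>mu\<close>, the
  occupancy measures of the two kernels then drift apart by at most \<open>D\<close> per layer, as they
  carry mass at most one; hence they differ by at most \<open>h D <= H D <= H^2 D\<close> at depth \<open>h\<close>.\<close>

definition distribution_on :: "'b set \<Rightarrow> ('b \<Rightarrow> real) \<Rightarrow> bool" where
  "distribution_on X p \<longleftrightarrow> (\<forall>x\<in>X. 0 \<le> p x) \<and> sum p X = 1"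

definition l1_dist :: "'b set \<Rightarrow> ('b \<Rightarrow> real) \<Rightarrow> ('b \<Rightarrow> real) \<Rightarrow> real" where
  "l1_dist X p q = (\<Sum>x\<in>X. \<bar>p x - q x\<bar>)"

lemma is_policy_iff_distribution_on:
  "is_policy S Aj pol \<longleftrightarrow> (\<forall>s\<in>S. distribution_on Aj (pol s))"
  by (simp add: is_policy_def distribution_on_def)

lemma abs_le_l1_dist: "finite X \<Longrightarrow> x \<in> X \<Longrightarrow> \<bar>p x - q x\<bar> \<le> l1_dist X p q"
  unfolding l1_dist_def by (rule member_le_sum) auto

lemma l1_dist_le_policy_dist:
  "finite S \<Longrightarrow> s \<in> S \<Longrightarrow> l1_dist Aj (pol s) (pol' s) \<le> policy_dist S Aj pol pol'"
  unfolding policy_dist_def l1_dist_def by (rule Max_ge) auto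

lemma policy_dist_nonneg: "finite S \<Longrightarrow> s \<in> S \<Longrightarrow> 0 \<le> policy_dist S Aj pol pol'"
  using l1_dist_le_policy_dist[of S s Aj pol pol'] unfolding l1_dist_def
  by (meson abs_ge_zero order_trans sum_nonneg)

lemma sup_dist_le:
  assumes "finite S" "S \<noteq> {}" "\<And>s. s \<in> S \<Longrightarrow> \<bar>f s - g s\<bar> \<le> c"
  shows "sup_dist S f g \<le> c"
  unfolding sup_dist_def using assms by (subst Max_le_iff) auto

lemma sum_mixture:
  fixes u :: "'b \<Rightarrow> real"
  assumes "\<And>x. x \<in> I \<Longrightarrow> sum (M x) Y = 1"
  shows "(\<Sum>y\<in>Y. \<Sum>x\<in>I. u x * M x y) = sum u I"
proof -
  have "(\<Sum>y\<in>Y. \<Sum>x\<in>I. u x * M x y) = (\<Sum>x\<in>I. u x * sum (M x) Y)"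
    by (simp add: sum.swap[of _ Y] sum_distrib_left)
  also have "\<dots> = sum u I"
    using assms by simp
  finally show ?thesis .
qed

lemma distribution_on_mixture:
  assumes "distribution_on I u" "\<And>x. x \<in> I \<Longrightarrow> distribution_on Y (M x)"
  shows "distribution_on Y (\<lambda>y. \<Sum>x\<in>I. u x * M x y)"
  using assms sum_mixture[of I M Y u]
  by (auto simp: distribution_on_def intro!: sum_nonneg mult_nonneg_nonneg)

text \<open>From \<open>u1 M1 - u0 M0 = (u1 - u0) M1 + u0 (M1 - M0)\<close>. For \<open>M0 = M1\<close> and \<open>D = 0\<close>
  it says that mixing with a common kernel does not increase L1 distances.\<close>
lemma l1_dist_mixture_le:
  assumes u0: "\<And>x. x \<in> I \<Longrightarrow> 0 \<le> u0 x"
    and M1: "\<And>x. x \<in> I \<Longrightarrow> distribution_on Y (M1 x)"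
    and D: "\<And>x. x \<in> I \<Longrightarrow> l1_dist Y (M1 x) (M0 x) \<le> D"
  shows "l1_dist Y (\<lambda>y. \<Sum>x\<in>I. u1 x * M1 x y) (\<lambda>y. \<Sum>x\<in>I. u0 x * M0 x y)
           \<le> l1_dist I u1 u0 + D * sum u0 I"
proof -
  have split: "\<bar>u1 x * M1 x y - u0 x * M0 x y\<bar>
      \<le> \<bar>u1 x - u0 x\<bar> * M1 x y + u0 x * \<bar>M1 x y - M0 x y\<bar>" if "x \<in> I" "y \<in> Y" for x y
  proof -
    have "u1 x * M1 x y - u0 x * M0 x y = (u1 x - u0 x) * M1 x y + u0 x * (M1 x y - M0 x y)"
      by (simp add: algebra_simps)
    then show ?thesis
      using abs_triangle_ineq[of "(u1 x - u0 x) * M1 x y" "u0 x * (M1 x y - M0 x y)"]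
        u0[OF that(1)] M1[OF that(1)] that(2)
      by (simp add: abs_mult distribution_on_def)
  qed
  have "l1_dist Y (\<lambda>y. \<Sum>x\<in>I. u1 x * M1 x y) (\<lambda>y. \<Sum>x\<in>I. u0 x * M0 x y)
      \<le> (\<Sum>y\<in>Y. \<Sum>x\<in>I. \<bar>u1 x - u0 x\<bar> * M1 x y + u0 x * \<bar>M1 x y - M0 x y\<bar>)"
    unfolding l1_dist_def sum_subtractf[symmetric]
    by (intro sum_mono order.trans[OF sum_abs]) (use split in auto)
  also have "\<dots> = (\<Sum>x\<in>I. \<bar>u1 x - u0 x\<bar> * sum (M1 x) Y + u0 x * l1_dist Y (M1 x) (M0 x))"
    by (simp add: l1_dist_def sum.distrib sum.swap[of _ Y] sum_distrib_left)
  also have "\<dots> \<le> (\<Sum>x\<in>I. \<bar>u1 x - u0 x\<bar> + u0 x * D)"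
    using M1 D u0 by (intro sum_mono) (auto simp: distribution_on_def mult_left_mono)
  also have "\<dots> = l1_dist I u1 u0 + D * sum u0 I"
    by (simp add: l1_dist_def sum.distrib sum_distrib_left mult.commute)
  finally show ?thesis .
qed

lemma l1_dist_product_le:
  assumes q: "distribution_on X q" and p': "distribution_on Y p'"
  shows "l1_dist (X \<times> Y) (\<lambda>(x, y). p x * p' y) (\<lambda>(x, y). q x * q' y)
           \<le> l1_dist X p q + l1_dist Y p' q'"
proof -
  have split: "\<bar>p x * p' y - q x * q' y\<bar> \<le> \<bar>p x - q x\<bar> * p' y + q x * \<bar>p' y - q' y\<bar>"
    if "x \<in> X" "y \<in> Y" for x y
  proof -
    have "p x * p' y - q x * q' y = (p x - q x) * p' y + q x * (p' y - q' y)"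
      by (simp add: algebra_simps)
    then show ?thesis
      using abs_triangle_ineq[of "(p x - q x) * p' y" "q x * (p' y - q' y)"] q p' that
      by (simp add: abs_mult distribution_on_def)
  qed
  have "l1_dist (X \<times> Y) (\<lambda>(x, y). p x * p' y) (\<lambda>(x, y). q x * q' y)
      \<le> (\<Sum>x\<in>X. \<Sum>y\<in>Y. \<bar>p x - q x\<bar> * p' y + q x * \<bar>p' y - q' y\<bar>)"
    unfolding l1_dist_def sum.cartesian_product by (intro sum_mono) (auto intro!: split)
  also have "\<dots> = l1_dist X p q * sum p' Y + sum q X * l1_dist Y p' q'"
    by (simp add: l1_dist_def sum.distrib sum_distrib_left sum_distrib_right sum.swap[of _ Y])
  also have "\<dots> = l1_dist X p q + l1_dist Y p' q'"
    using q p' by (simp add: distribution_on_def)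
  finally show ?thesis .
qed

lemma sum_PiE_insert:
  "k \<notin> J \<Longrightarrow> (\<Sum>g\<in>PiE (insert k J) B. F g) = (\<Sum>(y, g)\<in>B k \<times> PiE J B. F (g(k := y)))"
  by (simp add: PiE_insert_eq sum.reindex inj_combinator prod.case_distrib)

lemma prod_insert_fun_upd:
  assumes "finite J" "k \<notin> J"
  shows "(\<Prod>j\<in>insert k J. f j ((g(k := y)) j)) = f k y * (\<Prod>j\<in>J. f j (g j))"
proof -
  have "(\<Prod>j\<in>J. f j ((g(k := y)) j)) = (\<Prod>j\<in>J. f j (g j))"
    using assms(2) by (intro prod.cong) auto
  then show ?thesis
    using assms by simp
qed

lemma distribution_on_prod_PiE:
  assumes "finite J" "\<And>j. j \<in> J \<Longrightarrow> finite (B j)" "\<And>j. j \<in> J \<Longrightarrow> distribution_on (B j) (p j)"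
  shows "distribution_on (PiE J B) (\<lambda>g. \<Prod>j\<in>J. p j (g j))"
proof -
  have "(\<Sum>g\<in>PiE J B. \<Prod>j\<in>J. p j (g j)) = (\<Prod>j\<in>J. sum (p j) (B j))"
    using assms by (simp add: prod_sum_PiE)
  also have "\<dots> = 1"
    using assms by (simp add: distribution_on_def)
  finally show ?thesis
    using assms by (auto simp: distribution_on_def PiE_iff intro!: prod_nonneg)
qed

lemma l1_dist_prod_PiE_le:
  assumes "finite J" "\<And>j. j \<in> J \<Longrightarrow> finite (B j)"
    and "\<And>j. j \<in> J \<Longrightarrow> distribution_on (B j) (p j)" "\<And>j. j \<in> J \<Longrightarrow> distribution_on (B j) (q j)"
  shows "l1_dist (PiE J B) (\<lambda>g. \<Prod>j\<in>J. p j (g j)) (\<lambda>g. \<Prod>j\<in>J. q j (g j))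
           \<le> (\<Sum>j\<in>J. l1_dist (B j) (p j) (q j))"
  using assms
proof (induction J rule: finite_induct)
  case empty
  then show ?case by (simp add: l1_dist_def)
next
  case (insert k J)
  have "l1_dist (PiE (insert k J) B) (\<lambda>g. \<Prod>j\<in>insert k J. p j (g j)) (\<lambda>g. \<Prod>j\<in>insert k J. q j (g j))
      = l1_dist (B k \<times> PiE J B) (\<lambda>(y, g). p k y * (\<Prod>j\<in>J. p j (g j)))
                                  (\<lambda>(y, g). q k y * (\<Prod>j\<in>J. q j (g j)))"
    unfolding l1_dist_def sum_PiE_insert[OF insert.hyps(2)] prod_insert_fun_upd[OF insert.hyps]
    by (simp add: case_prod_unfold)
  also have "\<dots> \<le> l1_dist (B k) (p k) (q k)
                 + l1_dist (PiE J B) (\<lambda>g. \<Prod>j\<in>J. p j (g j)) (\<lambda>g. \<Prod>j\<in>J. q j (g j))"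
    using insert by (intro l1_dist_product_le distribution_on_prod_PiE) auto
  also have "\<dots> \<le> l1_dist (B k) (p k) (q k) + (\<Sum>j\<in>J. l1_dist (B j) (p j) (q j))"
    using insert by (intro add_left_mono insert.IH) auto
  also have "\<dots> = (\<Sum>j\<in>insert k J. l1_dist (B j) (p j) (q j))"
    using insert.hyps by simp
  finally show ?case .
qed

definition state_kernel ::
  "'a set \<Rightarrow> ('s \<Rightarrow> 'a \<Rightarrow> 's \<Rightarrow> real) \<Rightarrow> ('s \<Rightarrow> 'a \<Rightarrow> real) \<Rightarrow> 's \<Rightarrow> 's \<Rightarrow> real" where
  "state_kernel Ai K mu s s' = (\<Sum>a\<in>Ai. mu s a * K s a s')"

lemma occ_Suc_state_kernel:
  "occ S layer s1 Ai K mu (Suc h) s' =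
     (\<Sum>s\<in>{s\<in>S. layer s = Suc h}. occ S layer s1 Ai K mu h s * state_kernel Ai K mu s s')"
  by (simp add: state_kernel_def sum_distrib_left mult.assoc)

lemma distribution_on_state_kernel:
  "distribution_on Ai (mu s) \<Longrightarrow> (\<And>a. a \<in> Ai \<Longrightarrow> distribution_on S (K s a))
    \<Longrightarrow> distribution_on S (state_kernel Ai K mu s)"
  unfolding state_kernel_def[abs_def] by (rule distribution_on_mixture)

lemma l1_dist_state_kernel_le:
  assumes "distribution_on Ai (mu s)" "\<And>a. a \<in> Ai \<Longrightarrow> distribution_on S (K1 s a)"
    and "\<And>a. a \<in> Ai \<Longrightarrow> l1_dist S (K1 s a) (K0 s a) \<le> D"
  shows "l1_dist S (state_kernel Ai K1 mu s) (state_kernel Ai K0 mu s) \<le> D"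
proof -
  have "l1_dist S (state_kernel Ai K1 mu s) (state_kernel Ai K0 mu s)
      \<le> l1_dist Ai (mu s) (mu s) + D * sum (mu s) Ai"
    unfolding state_kernel_def[abs_def] using assms
    by (intro l1_dist_mixture_le) (auto simp: distribution_on_def)
  then show ?thesis
    using assms(1) by (simp add: l1_dist_def distribution_on_def)
qed

lemma fun_upd_in_joint_actions:
  assumes "i < m" "a \<in> A i" "g \<in> PiE ({..<m} - {i}) A"
  shows "g(i := a) \<in> joint_actions m A"
proof -
  have "insert i ({..<m} - {i}) = {..<m}"
    using assms(1) by auto
  then show ?thesis
    using PiE_fun_upd[OF assms(2,3)] by (simp add: joint_actions_def)
qed

lemma induced_kernel_eq_mixture:
  assumes "i < m" "a \<in> A i"
  shows "induced_kernel m A P pol i s a s' =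
    (\<Sum>g\<in>PiE ({..<m} - {i}) A. (\<Prod>j\<in>{..<m} - {i}. pol j s (g j)) * P s (g(i := a)) s')"
  unfolding induced_kernel_def
proof (rule sum.reindex_bij_witness[of _ "\<lambda>g. g(i := a)" "\<lambda>b. b(i := undefined)"])
  fix b
  assume b: "b \<in> {b \<in> joint_actions m A. b i = a}"
  then show "(b(i := undefined))(i := a) = b"
    by auto
  show "b(i := undefined) \<in> PiE ({..<m} - {i}) A"
    using b by (auto simp: joint_actions_def PiE_def extensional_def)
  have "(\<Prod>j\<in>{..<m} - {i}. pol j s ((b(i := undefined)) j)) = (\<Prod>j\<in>{..<m} - {i}. pol j s (b j))"
    by (intro prod.cong) auto
  then show "(\<Prod>j\<in>{..<m} - {i}. pol j s ((b(i := undefined)) j)) * P s ((b(i := undefined))(i := a)) s'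
      = (\<Prod>j\<in>{..<m} - {i}. pol j s (b j)) * P s b s'"
    using b by auto
next
  fix g
  assume g: "g \<in> PiE ({..<m} - {i}) A"
  then show "(g(i := a))(i := undefined) = g"
    by (auto simp: PiE_def extensional_def)
  show "g(i := a) \<in> {b \<in> joint_actions m A. b i = a}"
    using fun_upd_in_joint_actions[OF assms g] by simp
qed

lemma layered_markov_game_distribution_on:
  "layered_markov_game H S layer s1 m A P \<Longrightarrow> s \<in> S \<Longrightarrow> layer s \<le> H \<Longrightarrow> b \<in> joint_actions m A
    \<Longrightarrow> distribution_on S (P s b)"
  unfolding layered_markov_game_def distribution_on_def by blast

lemma distribution_on_opponents_product:
  assumes "layered_markov_game H S layer s1 m A P" "\<forall>j<m. is_policy S (A j) (pol j)" "s \<in> S"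
  shows "distribution_on (PiE ({..<m} - {i}) A) (\<lambda>g. \<Prod>j\<in>{..<m} - {i}. pol j s (g j))"
proof (rule distribution_on_prod_PiE)
  show "finite (A j)" if "j \<in> {..<m} - {i}" for j
    using assms(1) that unfolding layered_markov_game_def by blast
  show "distribution_on (A j) (\<lambda>a. pol j s a)" if "j \<in> {..<m} - {i}" for j
    using assms(2,3) that by (simp add: is_policy_iff_distribution_on)
qed simp

context
  fixes H S layer s1 m A P i s a
  assumes game: "layered_markov_game H S layer s1 m A P"
    and i: "i < m" and s: "s \<in> S" "layer s \<le> H" and a: "a \<in> A i"
begin

lemma distribution_on_induced_kernel:
  assumes "\<forall>j<m. is_policy S (A j) (pol j)"
  shows "distribution_on S (induced_kernel m A P pol i s a)"
  unfolding induced_kernel_eq_mixture[where A = A, OF i a, abs_def]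
proof (rule distribution_on_mixture)
  show "distribution_on (PiE ({..<m} - {i}) A) (\<lambda>g. \<Prod>j\<in>{..<m} - {i}. pol j s (g j))"
    using game assms s(1) by (rule distribution_on_opponents_product)
  show "distribution_on S (P s (g(i := a)))" if "g \<in> PiE ({..<m} - {i}) A" for g
    using game s fun_upd_in_joint_actions[OF i a that] by (rule layered_markov_game_distribution_on)
qed

lemma l1_dist_induced_kernel_le:
  assumes "\<forall>j<m. is_policy S (A j) (pol1 j)" "\<forall>j<m. is_policy S (A j) (pol0 j)"
  shows "l1_dist S (induced_kernel m A P pol1 i s a) (induced_kernel m A P pol0 i s a)
           \<le> (\<Sum>j\<in>{..<m} - {i}. l1_dist (A j) (pol1 j s) (pol0 j s))"
proof -
  let ?J = "{..<m} - {i}"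
  have "l1_dist S (induced_kernel m A P pol1 i s a) (induced_kernel m A P pol0 i s a)
      \<le> l1_dist (PiE ?J A) (\<lambda>g. \<Prod>j\<in>?J. pol1 j s (g j)) (\<lambda>g. \<Prod>j\<in>?J. pol0 j s (g j))
        + 0 * (\<Sum>g\<in>PiE ?J A. \<Prod>j\<in>?J. pol0 j s (g j))"
    unfolding induced_kernel_eq_mixture[where A = A, OF i a, abs_def]
  proof (rule l1_dist_mixture_le)
    fix g
    assume g: "g \<in> PiE ?J A"
    show "0 \<le> (\<Prod>j\<in>?J. pol0 j s (g j))"
      using distribution_on_opponents_product[OF game assms(2) s(1), of i] g
      by (simp add: distribution_on_def)
    show "distribution_on S (P s (g(i := a)))"
      using game s fun_upd_in_joint_actions[OF i a g] by (rule layered_markov_game_distribution_on)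
  qed (simp add: l1_dist_def)
  also have "\<dots> \<le> (\<Sum>j\<in>?J. l1_dist (A j) (pol1 j s) (pol0 j s))"
  proof (simp, rule l1_dist_prod_PiE_le)
    show "finite (A j)" if "j \<in> ?J" for j
      using game that unfolding layered_markov_game_def by blast
    show "distribution_on (A j) (pol1 j s)" "distribution_on (A j) (pol0 j s)" if "j \<in> ?J" for j
      using assms s(1) that by (simp_all add: is_policy_iff_distribution_on)
  qed simp
  finally show ?thesis .
qed

end

context
  fixes H S layer s1 m A P i mu
  assumes game: "layered_markov_game H S layer s1 m A P"
    and i: "i < m" and mu: "is_policy S (A i) mu"
begin

lemma distribution_on_induced_state_kernel:
  assumes "\<forall>j<m. is_policy S (A j) (pol j)" "s \<in> S" "layer s \<le> H"
  shows "distribution_on S (state_kernel (A i) (induced_kernel m A P pol i) mu s)"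
  using mu assms distribution_on_induced_kernel[OF game i assms(2,3) _ assms(1)]
  by (intro distribution_on_state_kernel) (auto simp: is_policy_iff_distribution_on)

lemma l1_dist_induced_state_kernel_le:
  assumes pol1: "\<forall>j<m. is_policy S (A j) (pol1 j)" and pol0: "\<forall>j<m. is_policy S (A j) (pol0 j)"
    and s: "s \<in> S" "layer s \<le> H"
  shows "l1_dist S (state_kernel (A i) (induced_kernel m A P pol1 i) mu s)
                   (state_kernel (A i) (induced_kernel m A P pol0 i) mu s)
           \<le> (\<Sum>j\<in>{..<m} - {i}. policy_dist S (A j) (pol1 j) (pol0 j))"
proof (rule l1_dist_state_kernel_le)
  fix a
  assume a: "a \<in> A i"
  have "finite S"
    using game unfolding layered_markov_game_def by blast
  then have "(\<Sum>j\<in>{..<m} - {i}. l1_dist (A j) (pol1 j s) (pol0 j s))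
      \<le> (\<Sum>j\<in>{..<m} - {i}. policy_dist S (A j) (pol1 j) (pol0 j))"
    using s by (intro sum_mono l1_dist_le_policy_dist)
  with l1_dist_induced_kernel_le[OF game i s a pol1 pol0]
  show "l1_dist S (induced_kernel m A P pol1 i s a) (induced_kernel m A P pol0 i s a)
      \<le> (\<Sum>j\<in>{..<m} - {i}. policy_dist S (A j) (pol1 j) (pol0 j))"
    by linarith
qed (use mu s distribution_on_induced_kernel[OF game i s _ pol1] in
      \<open>auto simp: is_policy_iff_distribution_on\<close>)

end

context
  fixes S :: "'s set" and layer :: "'s \<Rightarrow> nat" and H :: nat
    and Ai K mu
  assumes kernel: "\<And>s. s \<in> S \<Longrightarrow> layer s \<le> H \<Longrightarrow> distribution_on S (state_kernel Ai K mu s)"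
begin

lemma occ_nonneg: "h \<le> H \<Longrightarrow> s \<in> S \<Longrightarrow> 0 \<le> occ S layer s1 Ai K mu h s"
proof (induction h arbitrary: s)
  case (Suc h)
  then show ?case
    unfolding occ_Suc_state_kernel using kernel
    by (intro sum_nonneg mult_nonneg_nonneg) (auto simp: distribution_on_def)
qed simp

lemma occ_mass_le_1:
  assumes "finite S"
  shows "h \<le> H \<Longrightarrow> sum (occ S layer s1 Ai K mu h) S \<le> 1"
proof (induction h)
  case 0
  show ?case
    using assms by (simp add: sum.If_cases)
next
  case (Suc h)
  let ?L = "{s\<in>S. layer s = Suc h}"
  have "sum (occ S layer s1 Ai K mu (Suc h)) S = sum (occ S layer s1 Ai K mu h) ?L"
    unfolding occ_Suc_state_kernel using kernel Suc.prems
    by (intro sum_mixture) (auto simp: distribution_on_def)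
  also have "\<dots> \<le> sum (occ S layer s1 Ai K mu h) S"
    using assms Suc.prems by (intro sum_mono2 occ_nonneg) auto
  finally show ?case
    using Suc by simp
qed

end

lemma occ_l1_dist_le:
  assumes S: "finite S" and D: "0 \<le> D"
    and K1: "\<And>s. s \<in> S \<Longrightarrow> layer s \<le> H \<Longrightarrow> distribution_on S (state_kernel Ai K1 mu s)"
    and K0: "\<And>s. s \<in> S \<Longrightarrow> layer s \<le> H \<Longrightarrow> distribution_on S (state_kernel Ai K0 mu s)"
    and K_dist: "\<And>s. s \<in> S \<Longrightarrow> layer s \<le> H
      \<Longrightarrow> l1_dist S (state_kernel Ai K1 mu s) (state_kernel Ai K0 mu s) \<le> D"
  shows "h \<le> H \<Longrightarrow> l1_dist S (occ S layer s1 Ai K1 mu h) (occ S layer s1 Ai K0 mu h) \<le> real h * D"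
proof (induction h)
  case 0
  show ?case by (simp add: l1_dist_def)
next
  case (Suc h)
  let ?L = "{s\<in>S. layer s = Suc h}"
  let ?o1 = "occ S layer s1 Ai K1 mu" and ?o0 = "occ S layer s1 Ai K0 mu"
  have o0_nonneg: "\<And>s. s \<in> S \<Longrightarrow> 0 \<le> ?o0 h s"
    using K0 Suc.prems by (intro occ_nonneg[where H = H]) auto
  have "l1_dist S (?o1 (Suc h)) (?o0 (Suc h)) \<le> l1_dist ?L (?o1 h) (?o0 h) + D * sum (?o0 h) ?L"
    unfolding occ_Suc_state_kernel[abs_def] using K1 K_dist Suc.prems o0_nonneg
    by (intro l1_dist_mixture_le) auto
  also have "\<dots> \<le> l1_dist S (?o1 h) (?o0 h) + D * sum (?o0 h) S"
    unfolding l1_dist_def using S D o0_nonneg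
    by (intro add_mono mult_left_mono sum_mono2) auto
  also have "\<dots> \<le> real h * D + D * 1"
    using Suc S D K0 by (intro add_mono mult_left_mono occ_mass_le_1[where H = H]) auto
  also have "\<dots> = real (Suc h) * D"
    by (simp add: algebra_simps)
  finally show ?case .
qed

lemma sup_dist_occupancy_le:
  assumes S: "finite S" "S \<noteq> {}" and layer: "\<And>s. s \<in> S \<Longrightarrow> layer s \<le> Suc H"
    and D: "0 \<le> D"
    and K1: "\<And>s. s \<in> S \<Longrightarrow> layer s \<le> H \<Longrightarrow> distribution_on S (state_kernel Ai K1 mu s)"
    and K0: "\<And>s. s \<in> S \<Longrightarrow> layer s \<le> H \<Longrightarrow> distribution_on S (state_kernel Ai K0 mu s)"
    and K_dist: "\<And>s. s \<in> S \<Longrightarrow> layer s \<le> H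
      \<Longrightarrow> l1_dist S (state_kernel Ai K1 mu s) (state_kernel Ai K0 mu s) \<le> D"
  shows "sup_dist S (occupancy S layer s1 Ai K1 mu) (occupancy S layer s1 Ai K0 mu) \<le> real H * D"
proof (rule sup_dist_le[OF S])
  fix s
  assume s: "s \<in> S"
  let ?h = "layer s - 1"
  have "\<bar>occupancy S layer s1 Ai K1 mu s - occupancy S layer s1 Ai K0 mu s\<bar>
      \<le> l1_dist S (occ S layer s1 Ai K1 mu ?h) (occ S layer s1 Ai K0 mu ?h)"
    unfolding occupancy_def using S(1) s by (rule abs_le_l1_dist)
  also have "\<dots> \<le> real ?h * D"
    using layer[OF s] by (intro occ_l1_dist_le[OF S(1) D K1 K0 K_dist]) auto
  also have "\<dots> \<le> real H * D"
    using layer[OF s] D by (intro mult_right_mono) auto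
  finally show "\<bar>occupancy S layer s1 Ai K1 mu s - occupancy S layer s1 Ai K0 mu s\<bar> \<le> real H * D" .
qed

theorem lemma21:
  fixes H m i :: nat and S :: "'s set" and layer :: "'s \<Rightarrow> nat" and s1 :: 's
    and A :: "nat \<Rightarrow> 'a set" and P :: "'s \<Rightarrow> (nat \<Rightarrow> 'a) \<Rightarrow> 's \<Rightarrow> real"
    and pi_t pi_t1 :: "nat \<Rightarrow> 's \<Rightarrow> 'a \<Rightarrow> real" and mu :: "'s \<Rightarrow> 'a \<Rightarrow> real"
  assumes game: "layered_markov_game H S layer s1 m A P"
    and pol_t: "\<forall>j<m. is_policy S (A j) (pi_t j)"
    and pol_t1: "\<forall>j<m. is_policy S (A j) (pi_t1 j)"
    and i: "i < m"
    and mu: "is_policy S (A i) mu"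
  shows "sup_dist S
           (occupancy S layer s1 (A i) (induced_kernel m A P pi_t1 i) mu)
           (occupancy S layer s1 (A i) (induced_kernel m A P pi_t i) mu)
         \<le> (real H)^2 * (\<Sum>j\<in>{..<m}-{i}. policy_dist S (A j) (pi_t1 j) (pi_t j))"
proof -
  define D where "D = (\<Sum>j\<in>{..<m}-{i}. policy_dist S (A j) (pi_t1 j) (pi_t j))"
  have S: "finite S" "s1 \<in> S" and layer: "\<And>s. s \<in> S \<Longrightarrow> layer s \<le> Suc H"
    using game unfolding layered_markov_game_def by blast+
  have D: "0 \<le> D"
    unfolding D_def using S by (intro sum_nonneg policy_dist_nonneg)
  have "sup_dist S
          (occupancy S layer s1 (A i) (induced_kernel m A P pi_t1 i) mu)
          (occupancy S layer s1 (A i) (induced_kernel m A P pi_t i) mu) \<le> real H * D"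
    unfolding D_def using S layer D[unfolded D_def]
    by (intro sup_dist_occupancy_le distribution_on_induced_state_kernel[OF game i mu]
        l1_dist_induced_state_kernel_le[OF game i mu] pol_t pol_t1) auto
  also have "\<dots> \<le> (real H)^2 * D"
    using D le_square[of H] by (intro mult_right_mono) (simp_all add: power2_eq_square flip: of_nat_mult)
  finally show ?thesis
    unfolding D_def .
qed

end
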